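(* Let $\mathcal{P}$ be a profile of unrooted phylogenetic trees whose display graph $G(\mathcal{P})$ is connected. Then $G(\mathcal{P})$ has a complete set of pairwise parallel nice minimal cuts if and only if it has a complete set of pairwise parallel legal minimal cuts.
   Context: A phylogenetic tree is an unrooted tree whose leaves are bijectively labeled (leaves identified with labels; internal vertices have degree at least three). A profile $\mathcal{P}=\{T_1,\dots,T_k\}$ is a finite collection of phylogenetic trees; internal vertices of distinct trees are disjoint, while leaves with the same label are the same vertex. The display graph $G(\mathcal{P})$ has vertex set $\bigcup_i V(T_i)$ and edge set $\bigcup_i E(T_i)$. An edge of an input tree is internal if both endpoints are internal (non-leaf) vertices. For a vertex $u$ of an input tree, $\mathrm{Inc}(u)$ is the set of edges of $G(\mathcal{P})$ incident with $u$. A cut of a connected graph $G$ is $F\subseteq E(G)$ with $G-F$ (same vertices, edges of $F$ removed) disconnected; minimal if no proper subset is a cut. Minimal cuts $F,F'$ are parallel if $G-F$ has at most one connected component $H$ with $E(H)\cap F'\neq\emptyset$. A cut $F$ of $G(\mathcal{P})$ is legal if for every $T\in\mathcal{P}$ there is $u\in V(T)$ with $F\cap E(T)\subseteq\mathrm{Inc}(u)$; nice if legal and every component of $G(\mathcal{P})-F$ contains at least one edge. A set $\mathcal{F}$ of cuts of $G(\mathcal{P})$ is complete if for every $T\in\mathcal{P}$ and every internal edge $e$ of $T$ there is $F\in\mathcal{F}$ with $F\cap E(T)=\{e\}$. *)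

theory Defs
  imports Main
begin

definition adj :: "'v set set \<Rightarrow> ('v \<times> 'v) set" where
  "adj E = {(u, v). {u, v} \<in> E}"

definition graph_connected :: "'v set \<Rightarrow> 'v set set \<Rightarrow> bool" where
  "graph_connected V E \<longleftrightarrow> (\<forall>u\<in>V. \<forall>v\<in>V. (u, v) \<in> (adj E)\<^sup>*)"

definition components :: "'v set \<Rightarrow> 'v set set \<Rightarrow> 'v set set" where
  "components V E = {{v \<in> V. (u, v) \<in> (adj E)\<^sup>*} | u. u \<in> V}"

definition comp_edges :: "'v set set \<Rightarrow> 'v set \<Rightarrow> 'v set set" where
  "comp_edges E C = {e \<in> E. e \<subseteq> C}"

definition is_graph :: "'v set \<Rightarrow> 'v set set \<Rightarrow> bool" where
  "is_graph V E \<longleftrightarrow> finite V \<and> E \<subseteq> {{a, b} | a b. a \<noteq> b \<and> a \<in> V \<and> b \<in> V}"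

definition degree :: "'v set set \<Rightarrow> 'v \<Rightarrow> nat" where
  "degree E v = card {e \<in> E. v \<in> e}"

definition is_tree :: "'v set \<Rightarrow> 'v set set \<Rightarrow> bool" where
  "is_tree V E \<longleftrightarrow> is_graph V E \<and> V \<noteq> {} \<and> graph_connected V E \<and>
     (\<forall>e\<in>E. \<not> graph_connected V (E - {e}))"

type_synonym 'v tree = "'v set \<times> 'v set set"

definition tverts :: "'v tree \<Rightarrow> 'v set" where "tverts T = fst T"
definition tedges :: "'v tree \<Rightarrow> 'v set set" where "tedges T = snd T"

definition leaves :: "'v tree \<Rightarrow> 'v set" where
  "leaves T = {v \<in> tverts T. degree (tedges T) v \<le> 1}"

definition internal_verts :: "'v tree \<Rightarrow> 'v set" where
  "internal_verts T = tverts T - leaves T"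

text \<open>Phylogenetic tree: leaves are the labels themselves (identified with
their labels); internal vertices have degree at least three.\<close>
definition phylo_tree :: "'v tree \<Rightarrow> bool" where
  "phylo_tree T \<longleftrightarrow> is_tree (tverts T) (tedges T) \<and>
     (\<forall>v \<in> internal_verts T. degree (tedges T) v \<ge> 3)"

text \<open>Profile: finite set of phylogenetic trees; distinct trees share only
leaves (same label = same vertex), internal vertices are disjoint.\<close>
definition profile :: "'v tree set \<Rightarrow> bool" where
  "profile P \<longleftrightarrow> finite P \<and> (\<forall>T\<in>P. phylo_tree T) \<and>
     (\<forall>T\<in>P. \<forall>T'\<in>P. T \<noteq> T' \<longrightarrow>
        tverts T \<inter> tverts T' \<subseteq> leaves T \<inter> leaves T')"

definition dverts :: "'v tree set \<Rightarrow> 'v set" where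
  "dverts P = (\<Union>T\<in>P. tverts T)"
definition dedges :: "'v tree set \<Rightarrow> 'v set set" where
  "dedges P = (\<Union>T\<in>P. tedges T)"

definition internal_edge :: "'v tree \<Rightarrow> 'v set \<Rightarrow> bool" where
  "internal_edge T e \<longleftrightarrow> e \<in> tedges T \<and> e \<inter> leaves T = {}"

definition Inc :: "'v tree set \<Rightarrow> 'v \<Rightarrow> 'v set set" where
  "Inc P u = {e \<in> dedges P. u \<in> e}"

definition is_cut :: "'v set \<Rightarrow> 'v set set \<Rightarrow> 'v set set \<Rightarrow> bool" where
  "is_cut V E F \<longleftrightarrow> F \<subseteq> E \<and> \<not> graph_connected V (E - F)"

definition minimal_cut :: "'v set \<Rightarrow> 'v set set \<Rightarrow> 'v set set \<Rightarrow> bool" where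
  "minimal_cut V E F \<longleftrightarrow> is_cut V E F \<and> (\<forall>F'. F' \<subset> F \<longrightarrow> \<not> is_cut V E F')"

definition parallel :: "'v set \<Rightarrow> 'v set set \<Rightarrow> 'v set set \<Rightarrow> 'v set set \<Rightarrow> bool" where
  "parallel V E F F' \<longleftrightarrow>
     (\<forall>C1 \<in> components V (E - F). \<forall>C2 \<in> components V (E - F).
        comp_edges (E - F) C1 \<inter> F' \<noteq> {} \<longrightarrow> comp_edges (E - F) C2 \<inter> F' \<noteq> {} \<longrightarrow> C1 = C2)"

definition legal_cut :: "'v tree set \<Rightarrow> 'v set set \<Rightarrow> bool" where
  "legal_cut P F \<longleftrightarrow> is_cut (dverts P) (dedges P) F \<and>
     (\<forall>T\<in>P. \<exists>u\<in>tverts T. F \<inter> tedges T \<subseteq> Inc P u)"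

definition nice_cut :: "'v tree set \<Rightarrow> 'v set set \<Rightarrow> bool" where
  "nice_cut P F \<longleftrightarrow> legal_cut P F \<and>
     (\<forall>C \<in> components (dverts P) (dedges P - F). comp_edges (dedges P - F) C \<noteq> {})"

definition complete_cuts :: "'v tree set \<Rightarrow> 'v set set set \<Rightarrow> bool" where
  "complete_cuts P \<F> \<longleftrightarrow> (\<forall>F\<in>\<F>. is_cut (dverts P) (dedges P) F) \<and>
     (\<forall>T\<in>P. \<forall>e. internal_edge T e \<longrightarrow> (\<exists>F\<in>\<F>. F \<inter> tedges T = {e}))"

end

theory Submission
  imports Defs
begin

text \<open>Nice cuts are legal, so only the converse needs an argument: in a complete family of
  legal minimal cuts, every cut \<open>F\<close> with \<open>F \<inter> E(T) = {e}\<close> for an internal edge \<open>e\<close> of a tree \<open>T\<close>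
  is already nice, hence discarding the cuts that are not nice keeps the family complete. Indeed,
  an edgeless component of \<open>G(\<P>) - F\<close> is an isolated vertex \<open>u\<close>, so \<open>Inc(u) \<subseteq> F\<close>; since \<open>Inc(u)\<close>
  is itself a cut, minimality gives \<open>F = Inc(u)\<close>. Then \<open>u\<close> is an endpoint of \<open>e\<close> with only one
  incident edge in \<open>T\<close>, although internal vertices of a phylogenetic tree have degree at least
  three.\<close>

lemma is_graph_display_graph:
  assumes "profile P"
  shows "is_graph (dverts P) (dedges P)"
  unfolding is_graph_def
proof
  have "finite P" "\<forall>T\<in>P. finite (tverts T)"
    using assms unfolding profile_def phylo_tree_def is_tree_def is_graph_def by auto
  then show "finite (dverts P)" unfolding dverts_def by blast
  show "dedges P \<subseteq> {{a, b} | a b. a \<noteq> b \<and> a \<in> dverts P \<and> b \<in> dverts P}"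
  proof
    fix e assume "e \<in> dedges P"
    then obtain T where T: "T \<in> P" "e \<in> tedges T" unfolding dedges_def by blast
    with assms obtain a b where "e = {a, b}" "a \<noteq> b" "a \<in> tverts T" "b \<in> tverts T"
      unfolding profile_def phylo_tree_def is_tree_def is_graph_def by blast
    with T(1) show "e \<in> {{a, b} | a b. a \<noteq> b \<and> a \<in> dverts P \<and> b \<in> dverts P}"
      unfolding dverts_def by blast
  qed
qed

lemma edgeless_component_isolated:
  assumes graph: "is_graph V E"
    and C: "C \<in> components V (E - F)"
    and edgeless: "comp_edges (E - F) C = {}"
  obtains u where "u \<in> V" "{e \<in> E. u \<in> e} \<subseteq> F"
proof -
  from C obtain u where u: "u \<in> V" and C_def: "C = {v \<in> V. (u, v) \<in> (adj (E - F))\<^sup>*}"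
    unfolding components_def by blast
  have "{e \<in> E. u \<in> e} \<subseteq> F"
  proof (rule subsetI, rule ccontr)
    fix e assume e: "e \<in> {e \<in> E. u \<in> e}" and "e \<notin> F"
    then obtain x where "e = {u, x}" "x \<in> V"
      using graph unfolding is_graph_def by blast
    with e \<open>e \<notin> F\<close> have "(u, x) \<in> adj (E - F)" unfolding adj_def by auto
    with \<open>e = {u, x}\<close> \<open>x \<in> V\<close> u C_def have "e \<subseteq> C" by auto
    with e \<open>e \<notin> F\<close> edgeless show False unfolding comp_edges_def by blast
  qed
  with u show thesis by (rule that)
qed

lemma minimal_cut_eq_incident_edges:
  assumes min: "minimal_cut V E F"
    and u: "u \<in> V" and incident: "{e \<in> E. u \<in> e} \<subseteq> F"
  shows "F = {e \<in> E. u \<in> e}"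
proof -
  define F\<^sub>u where "F\<^sub>u = {e \<in> E. u \<in> e}"
  have "\<not> graph_connected V (E - F)"
    using min unfolding minimal_cut_def is_cut_def by simp
  then obtain a b where "a \<in> V" "b \<in> V" "a \<noteq> b"
    unfolding graph_connected_def by blast
  then obtain w where w: "w \<in> V" "w \<noteq> u" by blast
  have "(u, x) \<notin> adj (E - F\<^sub>u)" for x
    by (auto simp: adj_def F\<^sub>u_def)
  then have "(u, w) \<notin> (adj (E - F\<^sub>u))\<^sup>*"
    using w(2) by (auto elim: converse_rtranclE)
  with u w(1) have "is_cut V E F\<^sub>u"
    unfolding is_cut_def graph_connected_def F\<^sub>u_def by auto
  with min incident show ?thesis
    unfolding minimal_cut_def F\<^sub>u_def by blast
qed

lemma internal_edge_endpoint_degree: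
  assumes "profile P" "T \<in> P" "internal_edge T e" "u \<in> e"
  shows "3 \<le> degree (tedges T) u"
proof -
  from assms(1,2) have tree: "phylo_tree T" unfolding profile_def by simp
  with assms(3) have "e \<subseteq> tverts T"
    unfolding phylo_tree_def is_tree_def is_graph_def internal_edge_def by blast
  with assms(3,4) have "u \<in> internal_verts T"
    unfolding internal_edge_def internal_verts_def by blast
  with tree show ?thesis unfolding phylo_tree_def by blast
qed

lemma nice_cut_if_covers_internal_edge:
  assumes prof: "profile P" and legal: "legal_cut P F"
    and min: "minimal_cut (dverts P) (dedges P) F"
    and T: "T \<in> P" and internal: "internal_edge T e" and covers: "F \<inter> tedges T = {e}"
  shows "nice_cut P F"
  unfolding nice_cut_def
proof (intro conjI ballI notI)
  show "legal_cut P F" by (fact legal)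
  fix C
  assume "C \<in> components (dverts P) (dedges P - F)" "comp_edges (dedges P - F) C = {}"
  with is_graph_display_graph[OF prof] obtain u
    where u: "u \<in> dverts P" "{e \<in> dedges P. u \<in> e} \<subseteq> F"
    by (rule edgeless_component_isolated)
  have "tedges T \<subseteq> dedges P" using T unfolding dedges_def by blast
  with minimal_cut_eq_incident_edges[OF min u] covers
  have incident_T: "{e' \<in> tedges T. u \<in> e'} = {e}" by blast
  then have "u \<in> e" by blast
  with prof T internal have "3 \<le> degree (tedges T) u"
    by (rule internal_edge_endpoint_degree)
  with incident_T show False unfolding degree_def by simp
qed

lemma complete_cuts_restrict:
  assumes "complete_cuts P \<F>"
    and "\<And>F T e. F \<in> \<F> \<Longrightarrow> T \<in> P \<Longrightarrow> internal_edge T e \<Longrightarrow> F \<inter> tedges T = {e} \<Longrightarrow> Q F"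
  shows "complete_cuts P {F \<in> \<F>. Q F}"
  using assms unfolding complete_cuts_def by (metis (mono_tags, lifting) mem_Collect_eq)

theorem lemma8:
  fixes P :: "'v tree set"
  assumes "profile P"
    and "graph_connected (dverts P) (dedges P)"
  shows "(\<exists>\<F>. complete_cuts P \<F> \<and>
            (\<forall>F\<in>\<F>. nice_cut P F \<and> minimal_cut (dverts P) (dedges P) F) \<and>
            (\<forall>F\<in>\<F>. \<forall>F'\<in>\<F>. parallel (dverts P) (dedges P) F F'))
     \<longleftrightarrow> (\<exists>\<F>. complete_cuts P \<F> \<and>
            (\<forall>F\<in>\<F>. legal_cut P F \<and> minimal_cut (dverts P) (dedges P) F) \<and>
            (\<forall>F\<in>\<F>. \<forall>F'\<in>\<F>. parallel (dverts P) (dedges P) F F'))"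
    (is "?nice \<longleftrightarrow> ?legal")
proof
  show "?nice \<Longrightarrow> ?legal" unfolding nice_cut_def by blast
next
  assume ?legal
  then obtain \<F> where complete: "complete_cuts P \<F>"
    and legal_min: "\<forall>F\<in>\<F>. legal_cut P F \<and> minimal_cut (dverts P) (dedges P) F"
    and par: "\<forall>F\<in>\<F>. \<forall>F'\<in>\<F>. parallel (dverts P) (dedges P) F F'" by blast
  have "complete_cuts P {F \<in> \<F>. nice_cut P F}"
    using complete
  proof (rule complete_cuts_restrict)
    fix F T e
    assume "F \<in> \<F>" "T \<in> P" "internal_edge T e" "F \<inter> tedges T = {e}"
    with legal_min show "nice_cut P F"
      using nice_cut_if_covers_internal_edge[OF assms(1)] by blast
  qed
  with legal_min par show ?nice by blast
qed

end
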